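(* Let $\mathcal{C}=\mathcal{C}'\otimes\mathscr{C}$ be an $\mathbb{F}_q\mathcal{R}$-skew cyclic code of length $(\alpha,\beta)$, where $\mathcal{C}'$ is a skew cyclic code of length $\alpha$ over $\mathbb{F}_q$ and $\mathscr{C}$ is a skew cyclic code of length $\beta$ over $\mathcal{R}$, and $\mathcal{C}$ is generated as a left $\mathcal{R}[x;\theta]$-submodule of $R_{\alpha,\beta}$ by $(f(x),0)$ and $(0,g(x))$. Then $\mathcal{C}'^{\perp}\subseteq\mathcal{C}'$ and $\mathscr{C}^{\perp}\subseteq\mathscr{C}$ if and only if $\mathcal{C}^\perp\subseteq\mathcal{C}$.
   Context: Let $p$ be a prime, $q=p^m$, $\mathcal{R}=\mathbb{F}_q[u]/\langle u^2-u\rangle$. Fix $i$; $\Theta(a)=a^{p^i}$ on $\mathbb{F}_q$ and $\theta(a+ub)=a^{p^i}+ub^{p^i}$ on $\mathcal{R}$; $\eta(a+ub)=a$. $\mathbb{F}_q[x;\Theta]$, $\mathcal{R}[x;\theta]$ are skew polynomial rings with multiplication determined by $(ax^i)(bx^j)=a\Theta^i(b)x^{i+j}$ (resp. with $\theta$). $R_{\alpha,\beta}=\mathbb{F}_q[x;\Theta]/\langle x^\alpha-1\rangle\times\mathcal{R}[x;\theta]/\langle x^\beta-1\rangle$, identified with $\mathbb{F}_q^\alpha\times\mathcal{R}^\beta$, is a left $\mathcal{R}[x;\theta]$-module via $r(x)*(k(x),t(x))=(\eta(r(x))k(x),r(x)t(x))$. An $\mathbb{F}_q\mathcal{R}$-skew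 cyclic code of length $(\alpha,\beta)$ is an $\mathcal{R}$-submodule of $\mathbb{F}_q^\alpha\times\mathcal{R}^\beta$ (with $s*(x,y)=(\eta(s)x,sy)$ componentwise) closed under $\sigma(x_0,\dots,x_{\alpha-1},y_0,\dots,y_{\beta-1})=(\Theta(x_{\alpha-1}),\Theta(x_0),\dots,\Theta(x_{\alpha-2}),\theta(y_{\beta-1}),\theta(y_0),\dots,\theta(y_{\beta-2}))$. Skew cyclic codes of length $n$ over $\mathbb{F}_q$ (resp. $\mathcal{R}$) are linear codes (resp. $\mathcal{R}$-submodules) closed under $(c_0,\dots,c_{n-1})\mapsto(\Theta(c_{n-1}),\Theta(c_0),\dots,\Theta(c_{n-2}))$ (resp. with $\theta$). $A\otimes B=\{(a,b):a\in A,b\in B\}$. Duals: $\mathcal{C}'^\perp$ and $\mathscr{C}^\perp$ are taken with respect to the Euclidean inner product $\sum c_ic'_i$ over $\mathbb{F}_q$ and over $\mathcal{R}$ respectively; $\mathcal{C}^\perp$ is taken with respect to $l\cdot l'=u\sum_{i=0}^{\alpha-1}x_ix'_i+\sum_{j=0}^{\beta-1}y_jy'_j$ for $l=(x_0,\dots,x_{\alpha-1},y_0,\dots,y_{\beta-1})$, $l'=(x'_0,\dots,y'_{\beta-1})$. *)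

theory Defs
  imports "HOL-Computational_Algebra.Primes"
begin

(* F_q is modelled by a finite field type 'a with CARD('a) = p^m.
   The ring R = F_q[u]/<u^2-u> is modelled by pairs (a,b) :: 'a * 'a,
   where (a,b) stands for a + u b. *)

definition R_zero :: "'a::field * 'a" where
  "R_zero = (0, 0)"

definition R_add :: "'a::field * 'a => 'a * 'a => 'a * 'a" where
  "R_add r s = (fst r + fst s, snd r + snd s)"

(* (a+ub)(c+ud) = ac + u(ad+bc+bd), using u^2 = u *)
definition R_mul :: "'a::field * 'a => 'a * 'a => 'a * 'a" where
  "R_mul r s = (fst r * fst s, fst r * snd s + snd r * fst s + snd r * snd s)"

definition R_u :: "'a::field * 'a" where
  "R_u = (0, 1)"

definition R_emb :: "'a::field => 'a * 'a" where
  "R_emb a = (a, 0)"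

definition Theta :: "nat => nat => 'a::field => 'a" where
  "Theta p i a = a ^ (p ^ i)"

definition theta :: "nat => nat => 'a::field * 'a => 'a * 'a" where
  "theta p i r = (Theta p i (fst r), Theta p i (snd r))"

definition eta :: "'a::field * 'a => 'a" where
  "eta r = fst r"

(* skew cyclic shift (c_0,...,c_{n-1}) |-> (T c_{n-1}, T c_0, ..., T c_{n-2}) *)
definition cshift :: "('b => 'b) => 'b list => 'b list" where
  "cshift T xs = map T (rotate (length xs - 1) xs)"

definition skew_cyclic_F :: "nat => nat => nat => 'a::field list set => bool" where
  "skew_cyclic_F p i n C \<longleftrightarrow>
     C \<subseteq> {x. length x = n} \<and>
     replicate n 0 \<in> C \<and>
     (\<forall>x\<in>C. \<forall>y\<in>C. map2 (+) x y \<in> C) \<and>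
     (\<forall>a. \<forall>x\<in>C. map (\<lambda>c. a * c) x \<in> C) \<and>
     (\<forall>x\<in>C. cshift (Theta p i) x \<in> C)"

definition skew_cyclic_R :: "nat => nat => nat => ('a::field * 'a) list set => bool" where
  "skew_cyclic_R p i n C \<longleftrightarrow>
     C \<subseteq> {x. length x = n} \<and>
     replicate n R_zero \<in> C \<and>
     (\<forall>x\<in>C. \<forall>y\<in>C. map2 R_add x y \<in> C) \<and>
     (\<forall>s. \<forall>x\<in>C. map (R_mul s) x \<in> C) \<and>
     (\<forall>x\<in>C. cshift (theta p i) x \<in> C)"

definition mixed_zero :: "nat => nat => 'a::field list * ('a * 'a) list" where
  "mixed_zero \<alpha> \<beta> = (replicate \<alpha> 0, replicate \<beta> R_zero)"

definition mixed_add ::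
  "'a::field list * ('a * 'a) list => 'a list * ('a * 'a) list => 'a list * ('a * 'a) list" where
  "mixed_add v w = (map2 (+) (fst v) (fst w), map2 R_add (snd v) (snd w))"

definition mixed_smult :: "'a::field * 'a => 'a list * ('a * 'a) list => 'a list * ('a * 'a) list" where
  "mixed_smult s v = (map (\<lambda>c. eta s * c) (fst v), map (R_mul s) (snd v))"

definition mixed_sigma :: "nat => nat => 'a::field list * ('a * 'a) list => 'a list * ('a * 'a) list" where
  "mixed_sigma p i v = (cshift (Theta p i) (fst v), cshift (theta p i) (snd v))"

definition skew_cyclic_FR :: "nat => nat => nat => nat => ('a::field list * ('a * 'a) list) set => bool" where
  "skew_cyclic_FR p i \<alpha> \<beta> C \<longleftrightarrow>
     C \<subseteq> {v. length (fst v) = \<alpha> \<and> length (snd v) = \<beta>} \<and>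
     mixed_zero \<alpha> \<beta> \<in> C \<and>
     (\<forall>v\<in>C. \<forall>w\<in>C. mixed_add v w \<in> C) \<and>
     (\<forall>s. \<forall>v\<in>C. mixed_smult s v \<in> C) \<and>
     (\<forall>v\<in>C. mixed_sigma p i v \<in> C)"

(* Left action of r(x) = sum_k r_k x^k in R[x;theta] (coefficient list r) on
   R_{alpha,beta} = F_q[x;Theta]/<x^alpha-1> x R[x;theta]/<x^beta-1>:
   r(x) * (k(x), t(x)) = (eta(r(x)) k(x), r(x) t(x)) = sum_k r_k * sigma^k (k, t). *)
definition skew_act :: "nat => nat => ('a::field * 'a) list => 'a list * ('a * 'a) list => 'a list * ('a * 'a) list" where
  "skew_act p i r v =
     foldr mixed_add (map (\<lambda>k. mixed_smult (r ! k) ((mixed_sigma p i ^^ k) v)) [0..<length r])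
       (mixed_zero (length (fst v)) (length (snd v)))"

definition skew_span2 :: "nat => nat => 'a::field list * ('a * 'a) list => 'a list * ('a * 'a) list
     => ('a list * ('a * 'a) list) set" where
  "skew_span2 p i v w = {mixed_add (skew_act p i r v) (skew_act p i s w) | r s. True}"

definition code_prod :: "'b set => 'c set => ('b * 'c) set" where
  "code_prod A B = {(a, b). a \<in> A \<and> b \<in> B}"

definition dual_F :: "nat => 'a::field list set => 'a list set" where
  "dual_F n C = {x. length x = n \<and> (\<forall>c\<in>C. (\<Sum>j<n. c ! j * x ! j) = 0)}"

definition R_dot :: "('a::field * 'a) list => ('a * 'a) list => 'a * 'a" where
  "R_dot c y = foldr R_add (map2 R_mul c y) R_zero"

definition dual_R :: "nat => ('a::field * 'a) list set => ('a * 'a) list set" where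
  "dual_R n C = {y. length y = n \<and> (\<forall>c\<in>C. R_dot c y = R_zero)}"

definition mixed_dot :: "'a::field list * ('a * 'a) list => 'a list * ('a * 'a) list => 'a * 'a" where
  "mixed_dot l l' = R_add (R_mul R_u (R_emb (\<Sum>j<length (fst l). fst l ! j * fst l' ! j)))
                          (R_dot (snd l) (snd l'))"

definition dual_FR :: "nat => nat => ('a::field list * ('a * 'a) list) set => ('a list * ('a * 'a) list) set" where
  "dual_FR \<alpha> \<beta> C = {l. length (fst l) = \<alpha> \<and> length (snd l) = \<beta> \<and> (\<forall>c\<in>C. mixed_dot c l = R_zero)}"

end

theory Submission
  imports Defs
begin

(* Since C' and CC both contain
   the zero word, pairing a word of the ambient space with the codewords (c, 0) and
   (0, c) shows that the dual of C' \<otimes> CC is C'^\<perp> \<otimes> CC^\<perp>. A product of nonempty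
   sets lies in another product exactly when the factors do, and duals contain zero. *)

lemma code_prod_eq_Times: "code_prod A B = A \<times> B"
  by (auto simp: code_prod_def)

lemma R_mul_u_emb: "R_mul R_u (R_emb a) = (0, a)"
  by (simp add: R_mul_def R_u_def R_emb_def)

lemma mixed_dot_split:
  "mixed_dot (x, y) (x', y') = R_add (0, \<Sum>j<length x. x ! j * x' ! j) (R_dot y y')"
  by (simp add: mixed_dot_def R_mul_u_emb)

lemma R_dot_replicate_zero_left: "R_dot (replicate n R_zero) y = R_zero"
proof (induction n arbitrary: y)
  case 0
  then show ?case by (simp add: R_dot_def)
next
  case (Suc n)
  then show ?case
    by (cases y) (auto simp: R_dot_def R_add_def R_mul_def R_zero_def)
qed

lemma R_dot_replicate_zero_right: "R_dot c (replicate n R_zero) = R_zero"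
proof (induction c arbitrary: n)
  case Nil
  then show ?case by (simp add: R_dot_def)
next
  case (Cons a c)
  then show ?case
    by (cases n) (auto simp: R_dot_def R_add_def R_mul_def R_zero_def)
qed

lemma R_add_zero_left_eq_zero_iff: "R_add (0, s) r = R_zero \<longleftrightarrow> s + snd r = 0 \<and> fst r = 0"
  by (auto simp: R_add_def R_zero_def prod_eq_iff)

lemma dual_FR_code_prod:
  assumes "C' \<subseteq> {x. length x = \<alpha>}" "replicate \<alpha> 0 \<in> C'"
    and "CC \<subseteq> {y. length y = \<beta>}" "replicate \<beta> R_zero \<in> CC"
  shows "dual_FR \<alpha> \<beta> (code_prod C' CC) = code_prod (dual_F \<alpha> C') (dual_R \<beta> CC)"
proof (rule set_eqI, simp only: split_paired_all)
  fix x' :: "'a list" and y' :: "('a \<times> 'a) list"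
  show "(x', y') \<in> dual_FR \<alpha> \<beta> (code_prod C' CC) \<longleftrightarrow>
    (x', y') \<in> code_prod (dual_F \<alpha> C') (dual_R \<beta> CC)"
  proof
    assume dual: "(x', y') \<in> dual_FR \<alpha> \<beta> (code_prod C' CC)"
    have "(\<Sum>j<\<alpha>. c ! j * x' ! j) = 0" if "c \<in> C'" for c
    proof -
      have "mixed_dot (c, replicate \<beta> R_zero) (x', y') = R_zero"
        using dual that assms(4) by (auto simp: dual_FR_def code_prod_def)
      moreover have "length c = \<alpha>" using that assms(1) by auto
      ultimately show ?thesis
        by (simp add: mixed_dot_split R_dot_replicate_zero_left R_add_zero_left_eq_zero_iff)
           (simp add: R_zero_def)
    qed
    moreover have "R_dot c y' = R_zero" if "c \<in> CC" for c
    proof -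
      have "mixed_dot (replicate \<alpha> 0, c) (x', y') = R_zero"
        using dual that assms(2) by (auto simp: dual_FR_def code_prod_def)
      then show ?thesis
        by (simp add: mixed_dot_split R_add_def R_zero_def prod_eq_iff)
    qed
    ultimately show "(x', y') \<in> code_prod (dual_F \<alpha> C') (dual_R \<beta> CC)"
      using dual by (auto simp: dual_FR_def dual_F_def dual_R_def code_prod_def)
  next
    assume "(x', y') \<in> code_prod (dual_F \<alpha> C') (dual_R \<beta> CC)"
    then have x': "x' \<in> dual_F \<alpha> C'" and y': "y' \<in> dual_R \<beta> CC"
      by (auto simp: code_prod_def)
    have "mixed_dot (a, b) (x', y') = R_zero" if "a \<in> C'" "b \<in> CC" for a b
    proof -
      have "length a = \<alpha>" using that assms(1) by auto
      then have "(\<Sum>j<length a. a ! j * x' ! j) = 0" using x' that by (auto simp: dual_F_def)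
      moreover have "R_dot b y' = R_zero" using y' that by (auto simp: dual_R_def)
      ultimately show ?thesis
        by (simp add: mixed_dot_split R_add_def R_zero_def)
    qed
    then show "(x', y') \<in> dual_FR \<alpha> \<beta> (code_prod C' CC)"
      using x' y' by (auto simp: dual_FR_def dual_F_def dual_R_def code_prod_def)
  qed
qed

lemma replicate_zero_in_dual_F: "replicate n 0 \<in> dual_F n C"
  by (simp add: dual_F_def)

lemma replicate_zero_in_dual_R: "replicate n R_zero \<in> dual_R n C"
  by (simp add: dual_R_def R_dot_replicate_zero_right)

theorem theorem7:
  fixes p m i \<alpha> \<beta> :: nat
    and C' :: "'a::{field,finite} list set"
    and CC :: "('a * 'a) list set"
    and C :: "('a list * ('a * 'a) list) set"
    and f :: "'a list" and g :: "('a * 'a) list"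
  assumes "prime p"
    and "card (UNIV :: 'a set) = p ^ m"
    and "skew_cyclic_F p i \<alpha> C'"
    and "skew_cyclic_R p i \<beta> CC"
    and "C = code_prod C' CC"
    and "skew_cyclic_FR p i \<alpha> \<beta> C"
    and "length f = \<alpha>" and "length g = \<beta>"
    and "C = skew_span2 p i (f, replicate \<beta> R_zero) (replicate \<alpha> 0, g)"
  shows "(dual_F \<alpha> C' \<subseteq> C' \<and> dual_R \<beta> CC \<subseteq> CC) \<longleftrightarrow> dual_FR \<alpha> \<beta> C \<subseteq> C"
proof -
  have "dual_FR \<alpha> \<beta> C = code_prod (dual_F \<alpha> C') (dual_R \<beta> CC)"
    using assms(3-5) by (simp add: dual_FR_code_prod skew_cyclic_F_def skew_cyclic_R_def)
  moreover have "dual_F \<alpha> C' \<noteq> {}" "dual_R \<beta> CC \<noteq> {}"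
    using replicate_zero_in_dual_F replicate_zero_in_dual_R by blast+
  ultimately show ?thesis
    using assms(5) by (simp add: code_prod_eq_Times times_subset_iff)
qed

end
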